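(* Let $M$ be a duplicial module in a pre-additive category and $n\ge0$. Then $$\kappa_{n+1}s_{n,i}=\begin{cases}0,& i=0,\\ -s_{n,i-1}\kappa_n,& 1\le i\le n,\\ (s_{n,n+1}-s_{n,n})\kappa_n,& i=n+1.\end{cases}$$
   Context: Let $\mathcal A$ be a pre-additive category. Let $\Lambda_+$ be the category with objects $[n]$, $n\ge0$, where $\Lambda_+([m],[n])$ is the set of weakly monotone $f:\mathbb Z\to\mathbb Z$ with $f(j+m+1)=f(j)+n+1$ for all $j$ and $f(0)\ge0$. Define $\varepsilon^n_i:[n-1]\to[n]$ ($n\ge1$, $0\le i\le n$) by $\varepsilon^n_i(j)=j$ for $0\le j<i$, $j+1$ for $i\le j\le n-1$, and $\eta^n_i:[n+1]\to[n]$ ($0\le i\le n+1$) by $\eta^n_i(j)=j$ for $0\le j\le i$, $j-1$ for $i<j\le n+1$ (extended periodically). A duplicial module is a functor $M:\Lambda_+^{op}\to\mathcal A$; $M_n=M([n])$, $\partial_{n,i}=M(\varepsilon^n_i):M_n\to M_{n-1}$, $s_{n,i}=M(\eta^n_i):M_n\to M_{n+1}$. Convention $M_{-1}=0$, maps into/out of it zero. The Karoubi operator is $\kappa_n=(-1)^n(\partial_{n+1,0}s_{n,n+1}-s_{n-1,n}\partial_{n,0}):M_n\to M_n$ (so $\kappa_0=\partial_{1,0}s_{0,1}$). *)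

theory Defs
  imports Main
begin

record ('o,'m) preadd_cat =
  Hom  :: "'o \<Rightarrow> 'o \<Rightarrow> 'm set"
  Id   :: "'o \<Rightarrow> 'm"
  Comp :: "'m \<Rightarrow> 'm \<Rightarrow> 'm"
  Add  :: "'m \<Rightarrow> 'm \<Rightarrow> 'm"
  Zero :: "'o \<Rightarrow> 'o \<Rightarrow> 'm"
  Neg  :: "'m \<Rightarrow> 'm"

definition preadditive :: "('o,'m) preadd_cat \<Rightarrow> bool" where
  "preadditive C \<longleftrightarrow>
     (\<forall>a. Id C a \<in> Hom C a a) \<and>
     (\<forall>a b c f g. f \<in> Hom C a b \<longrightarrow> g \<in> Hom C b c \<longrightarrow> Comp C g f \<in> Hom C a c) \<and>
     (\<forall>a b f. f \<in> Hom C a b \<longrightarrow> Comp C f (Id C a) = f \<and> Comp C (Id C b) f = f) \<and>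
     (\<forall>a b c d f g h. f \<in> Hom C a b \<longrightarrow> g \<in> Hom C b c \<longrightarrow> h \<in> Hom C c d \<longrightarrow>
        Comp C h (Comp C g f) = Comp C (Comp C h g) f) \<and>
     (\<forall>a b. Zero C a b \<in> Hom C a b) \<and>
     (\<forall>a b f g. f \<in> Hom C a b \<longrightarrow> g \<in> Hom C a b \<longrightarrow> Add C f g \<in> Hom C a b) \<and>
     (\<forall>a b f. f \<in> Hom C a b \<longrightarrow> Neg C f \<in> Hom C a b) \<and>
     (\<forall>a b f g h. f \<in> Hom C a b \<longrightarrow> g \<in> Hom C a b \<longrightarrow> h \<in> Hom C a b \<longrightarrow>
        Add C (Add C f g) h = Add C f (Add C g h)) \<and>
     (\<forall>a b f g. f \<in> Hom C a b \<longrightarrow> g \<in> Hom C a b \<longrightarrow> Add C f g = Add C g f) \<and>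
     (\<forall>a b f. f \<in> Hom C a b \<longrightarrow> Add C (Zero C a b) f = f) \<and>
     (\<forall>a b f. f \<in> Hom C a b \<longrightarrow> Add C f (Neg C f) = Zero C a b) \<and>
     (\<forall>a b c f g g'. f \<in> Hom C a b \<longrightarrow> g \<in> Hom C b c \<longrightarrow> g' \<in> Hom C b c \<longrightarrow>
        Comp C (Add C g g') f = Add C (Comp C g f) (Comp C g' f)) \<and>
     (\<forall>a b c f f' g. f \<in> Hom C a b \<longrightarrow> f' \<in> Hom C a b \<longrightarrow> g \<in> Hom C b c \<longrightarrow>
        Comp C g (Add C f f') = Add C (Comp C g f) (Comp C g f'))"

text \<open>Morphisms of \<Lambda>_+ from [m] to [n]: weakly monotone f : Z \<rightarrow> Z with
  f(j+m+1) = f(j)+n+1 and f(0) \<ge> 0. Composition is function composition.\<close>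

definition lam_hom :: "nat \<Rightarrow> nat \<Rightarrow> (int \<Rightarrow> int) \<Rightarrow> bool" where
  "lam_hom m n f \<longleftrightarrow> mono f \<and> (\<forall>j. f (j + int m + 1) = f j + int n + 1) \<and> f 0 \<ge> 0"

text \<open>\<epsilon>^n_i : [n-1] \<rightarrow> [n] (n \<ge> 1), extended periodically (period n in the source).\<close>
definition eps :: "nat \<Rightarrow> nat \<Rightarrow> int \<Rightarrow> int" where
  "eps n i j = (let q = j div int n; r = j mod int n in
      q * (int n + 1) + (if r < int i then r else r + 1))"

text \<open>\<eta>^n_i : [n+1] \<rightarrow> [n], extended periodically (period n+2 in the source).\<close>
definition eta :: "nat \<Rightarrow> nat \<Rightarrow> int \<Rightarrow> int" where
  "eta n i j = (let q = j div (int n + 2); r = j mod (int n + 2) in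
      q * (int n + 1) + (if r \<le> int i then r else r - 1))"

text \<open>A duplicial module: a contravariant functor \<Lambda>_+ \<rightarrow> C, given by objects
  Mo n = M([n]) and the action Mf m n f = M(f) : M_n \<rightarrow> M_m for f : [m] \<rightarrow> [n].\<close>

definition duplicial ::
  "('o,'m) preadd_cat \<Rightarrow> (nat \<Rightarrow> 'o) \<Rightarrow> (nat \<Rightarrow> nat \<Rightarrow> (int \<Rightarrow> int) \<Rightarrow> 'm) \<Rightarrow> bool" where
  "duplicial C Mo Mf \<longleftrightarrow>
     (\<forall>m n f. lam_hom m n f \<longrightarrow> Mf m n f \<in> Hom C (Mo n) (Mo m)) \<and>
     (\<forall>n. Mf n n id = Id C (Mo n)) \<and>
     (\<forall>l m n f g. lam_hom l m f \<longrightarrow> lam_hom m n g \<longrightarrow>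
        Mf l n (g \<circ> f) = Comp C (Mf l m f) (Mf m n g))"

definition dface :: "(nat \<Rightarrow> nat \<Rightarrow> (int \<Rightarrow> int) \<Rightarrow> 'm) \<Rightarrow> nat \<Rightarrow> nat \<Rightarrow> 'm" where
  "dface Mf n i = Mf (n - 1) n (eps n i)"

definition sdeg :: "(nat \<Rightarrow> nat \<Rightarrow> (int \<Rightarrow> int) \<Rightarrow> 'm) \<Rightarrow> nat \<Rightarrow> nat \<Rightarrow> 'm" where
  "sdeg Mf n i = Mf (n + 1) n (eta n i)"

text \<open>Karoubi operator; for n = 0 the term through M_{-1} = 0 vanishes.\<close>
definition kappa ::
  "('o,'m) preadd_cat \<Rightarrow> (nat \<Rightarrow> nat \<Rightarrow> (int \<Rightarrow> int) \<Rightarrow> 'm) \<Rightarrow> nat \<Rightarrow> 'm" where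
  "kappa C Mf n =
     (if n = 0 then Comp C (dface Mf 1 0) (sdeg Mf 0 1)
      else (let x = Add C (Comp C (dface Mf (n + 1) 0) (sdeg Mf n (n + 1)))
                          (Neg C (Comp C (sdeg Mf (n - 1) n) (dface Mf n 0)))
            in if even n then x else Neg C x))"

end

theory Submission
  imports Defs
begin

text \<open>Up to the sign (-1)^(n+1), \<kappa>_{n+1} s_{n,i} is \<partial>_0 s_{n+2} s_i - s_{n+1} \<partial>_0 s_i,
  and by functoriality each of the two terms is M applied to a composite of \<epsilon>'s and \<eta>'s
  in \<Lambda>_+. These composites satisfy simplicial-type identities that move s_i to the left
  (as s_{i-1}; for i = n + 1 as s_n resp. s_{n+1}), and since a morphism of \<Lambda>_+ is
  determined by its values on one period, each identity is a finite check. For i = n + 1 one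
  also needs s_{n+1} s_n \<partial>_0 = s_n s_n \<partial>_0, so that the second term of
  (s_{n+1} - s_n) \<kappa>_n cancels.\<close>

lemma shift_mult:
  fixes f :: "int \<Rightarrow> int"
  assumes shift: "\<And>j. f (j + p) = f j + c"
  shows "f (j + q * p) = f j + q * c"
proof (induction q rule: int_induct[where k = 0])
  case base
  then show ?case by simp
next
  case (step1 q)
  have "f (j + (q + 1) * p) = f (j + q * p) + c"
    using shift[of "j + q * p"] by (simp add: algebra_simps)
  with step1.IH show ?case by (simp add: algebra_simps)
next
  case (step2 q)
  have "f (j + q * p) = f (j + (q - 1) * p) + c"
    using shift[of "j + (q - 1) * p"] by (simp add: algebra_simps)
  with step2.IH show ?case by (simp add: algebra_simps)
qed

lemma shift_eqI:
  fixes f g :: "int \<Rightarrow> int"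
  assumes "p > 0" "\<And>j. f (j + p) = f j + c" "\<And>j. g (j + p) = g j + c"
    and "\<And>r. 0 \<le> r \<Longrightarrow> r < p \<Longrightarrow> f r = g r"
  shows "f = g"
proof
  fix j
  have "f j = f (j mod p) + (j div p) * c"
    using shift_mult[of f p c "j mod p" "j div p"] assms(2) by simp
  also have "\<dots> = g (j mod p) + (j div p) * c"
    using assms(1,4) by simp
  also have "\<dots> = g j"
    using shift_mult[of g p c "j mod p" "j div p"] assms(3) by simp
  finally show "f j = g j" .
qed

lemma shift_monoI:
  fixes f :: "int \<Rightarrow> int"
  assumes "p > 0" and shift: "\<And>j. f (j + p) = f j + c"
    and step: "\<And>r. 0 \<le> r \<Longrightarrow> r < p \<Longrightarrow> f r \<le> f (r + 1)"
  shows "mono f"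
proof -
  have f_step: "f j \<le> f (j + 1)" for j
  proof -
    have "f j = f (j mod p) + (j div p) * c"
      using shift_mult[of f p c "j mod p" "j div p"] shift by simp
    also have "\<dots> \<le> f (j mod p + 1) + (j div p) * c"
      using assms(1) step by simp
    also have "\<dots> = f (j + 1)"
      using shift_mult[of f p c "j mod p + 1" "j div p"] shift
      by (simp add: algebra_simps)
    finally show ?thesis .
  qed
  show ?thesis
  proof (rule monoI)
    fix x y :: int
    assume "x \<le> y"
    then show "f x \<le> f y"
      by (induction y rule: int_ge_induct) (auto intro: order_trans f_step)
  qed
qed

lemma lam_hom_comp:
  assumes "lam_hom l m f" "lam_hom m n g"
  shows "lam_hom l n (g \<circ> f)"
proof -
  have "0 \<le> g (f 0)"
    using assms order_trans[of 0 "g 0" "g (f 0)"] by (simp add: lam_hom_def monoD)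
  then show ?thesis
    using assms by (auto simp: lam_hom_def mono_def add.assoc)
qed

lemma lam_hom_eqI:
  assumes "lam_hom m n f" "lam_hom m n g" "\<And>r. 0 \<le> r \<Longrightarrow> r \<le> int m \<Longrightarrow> f r = g r"
  shows "f = g"
  using assms by (intro shift_eqI[of "int m + 1" f "int n + 1"]) (auto simp: lam_hom_def add.assoc)

lemma eps_shift:
  assumes "n > 0"
  shows "eps n i (j + int n) = eps n i j + (int n + 1)"
proof -
  have "(j + int n) div int n = j div int n + 1"
    using assms by (simp add: div_add_self2)
  then show ?thesis
    by (simp add: eps_def Let_def distrib_right)
qed

lemma eta_shift: "eta n i (j + (int n + 2)) = eta n i j + (int n + 1)"
proof -
  have "(j + (int n + 2)) div (int n + 2) = j div (int n + 2) + 1"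
    by (simp add: div_add_self2)
  then show ?thesis
    by (simp add: eta_def Let_def distrib_right)
qed

lemma eps_two_periods:
  assumes "0 \<le> j" "j < 2 * int n"
  shows "eps n i j = (if j < int n then (if j < int i then j else j + 1)
    else int n + 1 + (if j - int n < int i then j - int n else j - int n + 1))"
proof (cases "j < int n")
  case True
  then show ?thesis
    using assms by (simp add: eps_def Let_def)
next
  case False
  then have "eps n i j = eps n i (j - int n) + (int n + 1)"
    using eps_shift[of n i "j - int n"] assms by simp
  moreover have "(j - int n) div int n = 0" "(j - int n) mod int n = j - int n"
    using False assms by (intro div_pos_pos_trivial mod_pos_pos_trivial; simp)+
  ultimately show ?thesis
    using False by (simp add: eps_def Let_def)
qed

lemma eta_two_periods:
  assumes "0 \<le> j" "j < 2 * (int n + 2)"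
  shows "eta n i j = (if j < int n + 2 then (if j \<le> int i then j else j - 1)
    else int n + 1 + (if j - (int n + 2) \<le> int i then j - (int n + 2) else j - (int n + 2) - 1))"
proof (cases "j < int n + 2")
  case True
  then show ?thesis
    using assms by (simp add: eta_def Let_def)
next
  case False
  then have "eta n i j = eta n i (j - (int n + 2)) + (int n + 1)"
    using eta_shift[of n i "j - (int n + 2)"] by simp
  moreover have "(j - (int n + 2)) div (int n + 2) = 0" "(j - (int n + 2)) mod (int n + 2) = j - (int n + 2)"
    using False assms by (intro div_pos_pos_trivial mod_pos_pos_trivial; simp)+
  ultimately show ?thesis
    using False by (simp add: eta_def Let_def)
qed

lemma lam_homI:
  assumes "mono f" "\<And>j. f (j + (int m + 1)) = f j + (int n + 1)" "0 \<le> f 0"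
  shows "lam_hom m n f"
  using assms by (simp add: lam_hom_def add.assoc)

lemma lam_hom_eps: "lam_hom n (Suc n) (eps (Suc n) i)"
proof (rule lam_homI)
  show shift: "eps (Suc n) i (j + (int n + 1)) = eps (Suc n) i j + (int (Suc n) + 1)" for j
    using eps_shift[of "Suc n" i j] by (simp add: add.commute)
  show "mono (eps (Suc n) i)"
    by (rule shift_monoI[of "int n + 1" _ "int (Suc n) + 1"]) (auto simp: shift eps_two_periods)
  show "0 \<le> eps (Suc n) i 0"
    by (simp add: eps_def)
qed

lemma lam_hom_eta: "lam_hom (Suc n) n (eta n i)"
proof (rule lam_homI)
  show "eta n i (j + (int (Suc n) + 1)) = eta n i j + (int n + 1)" for j
    using eta_shift[of n i j] by (simp add: add.commute)
  show "mono (eta n i)"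
    by (rule shift_monoI[of "int n + 2" _ "int n + 1"]) (auto simp: eta_shift eta_two_periods)
  show "0 \<le> eta n i 0"
    by (simp add: eta_def)
qed

locale preadditive_category =
  fixes C :: "('o, 'm) preadd_cat"
  assumes preadditive: "preadditive C"
begin

lemma comp_closed: "f \<in> Hom C a b \<Longrightarrow> g \<in> Hom C b c \<Longrightarrow> Comp C g f \<in> Hom C a c"
  using preadditive unfolding preadditive_def by simp

lemma comp_assoc:
  "f \<in> Hom C a b \<Longrightarrow> g \<in> Hom C b c \<Longrightarrow> h \<in> Hom C c d \<Longrightarrow>
    Comp C h (Comp C g f) = Comp C (Comp C h g) f"
  using preadditive unfolding preadditive_def by simp

lemma zero_closed: "Zero C a b \<in> Hom C a b"
  using preadditive unfolding preadditive_def by simp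

lemma add_closed: "f \<in> Hom C a b \<Longrightarrow> g \<in> Hom C a b \<Longrightarrow> Add C f g \<in> Hom C a b"
  using preadditive unfolding preadditive_def by simp

lemma neg_closed: "f \<in> Hom C a b \<Longrightarrow> Neg C f \<in> Hom C a b"
  using preadditive unfolding preadditive_def by simp

lemma add_assoc:
  "f \<in> Hom C a b \<Longrightarrow> g \<in> Hom C a b \<Longrightarrow> h \<in> Hom C a b \<Longrightarrow>
    Add C (Add C f g) h = Add C f (Add C g h)"
  using preadditive unfolding preadditive_def by simp

lemma add_commute: "f \<in> Hom C a b \<Longrightarrow> g \<in> Hom C a b \<Longrightarrow> Add C f g = Add C g f"
  using preadditive unfolding preadditive_def by simp

lemma zero_add: "f \<in> Hom C a b \<Longrightarrow> Add C (Zero C a b) f = f"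
  using preadditive unfolding preadditive_def by simp

lemma add_neg: "f \<in> Hom C a b \<Longrightarrow> Add C f (Neg C f) = Zero C a b"
  using preadditive unfolding preadditive_def by simp

lemma comp_add_left:
  "f \<in> Hom C a b \<Longrightarrow> g \<in> Hom C b c \<Longrightarrow> g' \<in> Hom C b c \<Longrightarrow>
    Comp C (Add C g g') f = Add C (Comp C g f) (Comp C g' f)"
  using preadditive unfolding preadditive_def by simp

lemma comp_add_right:
  "f \<in> Hom C a b \<Longrightarrow> f' \<in> Hom C a b \<Longrightarrow> g \<in> Hom C b c \<Longrightarrow>
    Comp C g (Add C f f') = Add C (Comp C g f) (Comp C g f')"
  using preadditive unfolding preadditive_def by simp

lemma add_zero: "f \<in> Hom C a b \<Longrightarrow> Add C f (Zero C a b) = f"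
  using add_commute[OF _ zero_closed] zero_add by simp

lemma neg_unique:
  assumes f: "f \<in> Hom C a b" and g: "g \<in> Hom C a b" and sum: "Add C f g = Zero C a b"
  shows "Neg C f = g"
proof -
  have "Neg C f = Add C (Neg C f) (Add C f g)"
    using sum add_zero neg_closed[OF f] by simp
  also have "\<dots> = Add C (Add C f (Neg C f)) g"
    using add_assoc[OF neg_closed[OF f] f g] add_commute[OF f neg_closed[OF f]] by simp
  also have "\<dots> = g"
    using add_neg[OF f] zero_add[OF g] by simp
  finally show ?thesis .
qed

lemma neg_neg:
  assumes f: "f \<in> Hom C a b" shows "Neg C (Neg C f) = f"
  using neg_unique[OF neg_closed[OF f] f] add_commute[OF f neg_closed[OF f]] add_neg[OF f] by simp

lemma neg_zero: "Neg C (Zero C a b) = Zero C a b"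
  by (rule neg_unique) (simp_all add: zero_closed zero_add)

lemma neg_diff:
  assumes f: "f \<in> Hom C a b" and g: "g \<in> Hom C a b"
  shows "Neg C (Add C f (Neg C g)) = Add C g (Neg C f)"
proof (rule neg_unique)
  have nf: "Neg C f \<in> Hom C a b" and ng: "Neg C g \<in> Hom C a b"
    using f g by (simp_all add: neg_closed)
  have "Add C (Add C f (Neg C g)) (Add C g (Neg C f))
      = Add C f (Add C (Neg C g) (Add C g (Neg C f)))"
    using add_assoc[OF f ng add_closed[OF g nf]] .
  also have "Add C (Neg C g) (Add C g (Neg C f)) = Neg C f"
    using add_assoc[OF ng g nf, symmetric] add_commute[OF ng g] add_neg[OF g] zero_add[OF nf] by simp
  finally show "Add C (Add C f (Neg C g)) (Add C g (Neg C f)) = Zero C a b"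
    using add_neg[OF f] by simp
qed (use f g in \<open>simp_all add: neg_closed add_closed\<close>)

lemma comp_zero_left:
  assumes f: "f \<in> Hom C a b" shows "Comp C (Zero C b c) f = Zero C a c"
proof -
  have z: "Comp C (Zero C b c) f \<in> Hom C a c"
    using comp_closed[OF f zero_closed] .
  have "Add C (Comp C (Zero C b c) f) (Comp C (Zero C b c) f) = Comp C (Zero C b c) f"
    using comp_add_left[OF f zero_closed zero_closed] zero_add[OF zero_closed] by simp
  then show ?thesis
    using add_assoc[OF z z neg_closed[OF z]] add_neg[OF z] add_zero[OF z] by simp
qed

lemma comp_zero_right:
  assumes g: "g \<in> Hom C b c" shows "Comp C g (Zero C a b) = Zero C a c"
proof -
  have z: "Comp C g (Zero C a b) \<in> Hom C a c"
    using comp_closed[OF zero_closed g] .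
  have "Add C (Comp C g (Zero C a b)) (Comp C g (Zero C a b)) = Comp C g (Zero C a b)"
    using comp_add_right[OF zero_closed zero_closed g] zero_add[OF zero_closed] by simp
  then show ?thesis
    using add_assoc[OF z z neg_closed[OF z]] add_neg[OF z] add_zero[OF z] by simp
qed

lemma comp_neg_left:
  assumes f: "f \<in> Hom C a b" and g: "g \<in> Hom C b c"
  shows "Comp C (Neg C g) f = Neg C (Comp C g f)"
proof (rule neg_unique[symmetric])
  show "Add C (Comp C g f) (Comp C (Neg C g) f) = Zero C a c"
    using comp_add_left[OF f g neg_closed[OF g]] add_neg[OF g] comp_zero_left[OF f] by simp
qed (use f g in \<open>simp_all add: comp_closed neg_closed\<close>)

lemma comp_neg_right:
  assumes f: "f \<in> Hom C a b" and g: "g \<in> Hom C b c"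
  shows "Comp C g (Neg C f) = Neg C (Comp C g f)"
proof (rule neg_unique[symmetric])
  show "Add C (Comp C g f) (Comp C g (Neg C f)) = Zero C a c"
    using comp_add_right[OF f neg_closed[OF f] g] add_neg[OF f] comp_zero_right[OF g] by simp
qed (use comp_closed[OF f g] comp_closed[OF neg_closed[OF f] g] in simp_all)

lemma comp_diff_left:
  assumes "f \<in> Hom C a b" "g \<in> Hom C b c" "g' \<in> Hom C b c"
  shows "Comp C (Add C g (Neg C g')) f = Add C (Comp C g f) (Neg C (Comp C g' f))"
  using assms by (simp add: comp_add_left comp_neg_left neg_closed)

lemma comp_diff_right:
  assumes "f \<in> Hom C a b" "f' \<in> Hom C a b" "g \<in> Hom C b c"
  shows "Comp C g (Add C f (Neg C f')) = Add C (Comp C g f) (Neg C (Comp C g f'))"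
  using assms by (simp add: comp_add_right comp_neg_right neg_closed)

definition signed :: "nat \<Rightarrow> 'm \<Rightarrow> 'm" where
  "signed k f = (if even k then f else Neg C f)"

lemma signed_Suc: "f \<in> Hom C a b \<Longrightarrow> signed (Suc k) f = Neg C (signed k f)"
  by (simp add: signed_def neg_neg)

lemma neg_signed: "Neg C (signed k f) = signed k (Neg C f)"
  by (simp add: signed_def)

lemma signed_zero: "signed k (Zero C a b) = Zero C a b"
  by (simp add: signed_def neg_zero)

lemma comp_signed_left:
  "f \<in> Hom C a b \<Longrightarrow> g \<in> Hom C b c \<Longrightarrow> Comp C (signed k g) f = signed k (Comp C g f)"
  by (simp add: signed_def comp_neg_left)

lemma comp_signed_right:
  "f \<in> Hom C a b \<Longrightarrow> g \<in> Hom C b c \<Longrightarrow> Comp C g (signed k f) = signed k (Comp C g f)"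
  by (simp add: signed_def comp_neg_right)

end

locale duplicial_module = preadditive_category C for C :: "('o, 'm) preadd_cat" +
  fixes Mo :: "nat \<Rightarrow> 'o" and Mf :: "nat \<Rightarrow> nat \<Rightarrow> (int \<Rightarrow> int) \<Rightarrow> 'm"
  assumes duplicial: "duplicial C Mo Mf"
begin

lemma Mf_hom: "lam_hom m n f \<Longrightarrow> Mf m n f \<in> Hom C (Mo n) (Mo m)"
  using duplicial by (simp add: duplicial_def)

lemma Mf_comp_comp:
  assumes f: "lam_hom a b f" and g: "lam_hom b c g" and h: "lam_hom c d h"
  shows "Comp C (Comp C (Mf a b f) (Mf b c g)) (Mf c d h) = Mf a d (h \<circ> g \<circ> f)"
    and "Comp C (Mf a b f) (Comp C (Mf b c g) (Mf c d h)) = Mf a d (h \<circ> g \<circ> f)"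
proof -
  have comp: "Mf l n (g' \<circ> f') = Comp C (Mf l m f') (Mf m n g')"
    if "lam_hom l m f'" "lam_hom m n g'" for l m n f' g'
    using duplicial that by (simp add: duplicial_def)
  show left: "Comp C (Comp C (Mf a b f) (Mf b c g)) (Mf c d h) = Mf a d (h \<circ> g \<circ> f)"
    using comp[OF f g] comp[OF lam_hom_comp[OF f g] h] by (simp add: comp_assoc o_assoc)
  then show "Comp C (Mf a b f) (Comp C (Mf b c g) (Mf c d h)) = Mf a d (h \<circ> g \<circ> f)"
    using comp_assoc[OF Mf_hom[OF h] Mf_hom[OF g] Mf_hom[OF f]] by simp
qed

lemma sdeg_hom: "sdeg Mf n i \<in> Hom C (Mo n) (Mo (Suc n))"
  unfolding sdeg_def using Mf_hom[OF lam_hom_eta] by simp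

lemma dface_hom: "dface Mf (Suc n) i \<in> Hom C (Mo (Suc n)) (Mo n)"
  unfolding dface_def using Mf_hom[OF lam_hom_eps] by simp

definition face_degen :: "nat \<Rightarrow> 'm" where
  "face_degen n = Comp C (dface Mf (Suc n) 0) (sdeg Mf n (Suc n))"

text \<open>In degree 0 the composite s \<partial>_0 factors through M_{-1} = 0, hence is zero.\<close>
definition degen_face :: "nat \<Rightarrow> 'm" where
  "degen_face n =
    (case n of 0 \<Rightarrow> Zero C (Mo 0) (Mo 0) | Suc k \<Rightarrow> Comp C (sdeg Mf k n) (dface Mf n 0))"

lemma face_degen_hom: "face_degen n \<in> Hom C (Mo n) (Mo n)"
  unfolding face_degen_def using comp_closed[OF sdeg_hom dface_hom] .

lemma degen_face_hom: "degen_face n \<in> Hom C (Mo n) (Mo n)"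
  by (cases n) (simp_all add: degen_face_def zero_closed comp_closed[OF dface_hom sdeg_hom])

lemma kappa_eq_signed: "kappa C Mf n = signed n (Add C (face_degen n) (Neg C (degen_face n)))"
proof (cases n)
  case 0
  then show ?thesis
    using face_degen_hom[of 0]
    by (simp add: kappa_def signed_def face_degen_def degen_face_def neg_zero add_zero)
next
  case (Suc k)
  then show ?thesis
    by (simp add: kappa_def signed_def face_degen_def degen_face_def Let_def)
qed

lemma face_degen_sdeg_first:
  "Comp C (face_degen (Suc n)) (sdeg Mf n 0) = Comp C (degen_face (Suc n)) (sdeg Mf n 0)"
proof -
  have "eta n 0 \<circ> eta (n + 1) (n + 2) \<circ> eps (n + 2) 0
      = eta n 0 \<circ> eps (n + 1) 0 \<circ> eta n (n + 1)"
    by (rule lam_hom_eqI)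
      (auto intro!: lam_hom_comp lam_hom_eps lam_hom_eta simp: eps_two_periods eta_two_periods)
  then show ?thesis
    by (simp add: face_degen_def degen_face_def dface_def sdeg_def Mf_comp_comp lam_hom_eps lam_hom_eta)
qed

lemma face_degen_sdeg:
  assumes "0 < i" "i \<le> n"
  shows "Comp C (face_degen (Suc n)) (sdeg Mf n i) = Comp C (sdeg Mf n (i - 1)) (face_degen n)"
proof -
  have "eta n i \<circ> eta (n + 1) (n + 2) \<circ> eps (n + 2) 0
      = eta n (n + 1) \<circ> eps (n + 1) 0 \<circ> eta n (i - 1)"
    by (rule lam_hom_eqI) (use assms in \<open>auto intro!: lam_hom_comp lam_hom_eps lam_hom_eta
        simp: eps_two_periods eta_two_periods of_nat_diff\<close>)
  then show ?thesis
    by (simp add: face_degen_def dface_def sdeg_def Mf_comp_comp lam_hom_eps lam_hom_eta)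
qed

lemma degen_face_sdeg:
  assumes "0 < i" "i \<le> n"
  shows "Comp C (degen_face (Suc n)) (sdeg Mf n i) = Comp C (sdeg Mf n (i - 1)) (degen_face n)"
proof -
  obtain k where n: "n = Suc k"
    using assms by (cases n) auto
  have "eta n i \<circ> eps (n + 1) 0 \<circ> eta n (n + 1) = eps n 0 \<circ> eta k n \<circ> eta n (i - 1)"
    by (rule lam_hom_eqI) (use assms n in \<open>auto intro!: lam_hom_comp lam_hom_eps lam_hom_eta
        simp: eps_two_periods eta_two_periods of_nat_diff\<close>)
  then show ?thesis
    using n by (simp add: degen_face_def dface_def sdeg_def Mf_comp_comp lam_hom_eps lam_hom_eta)
qed

lemma face_degen_sdeg_last:
  "Comp C (face_degen (Suc n)) (sdeg Mf n (Suc n)) = Comp C (sdeg Mf n n) (face_degen n)"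
proof -
  have "eta n (n + 1) \<circ> eta (n + 1) (n + 2) \<circ> eps (n + 2) 0
      = eta n (n + 1) \<circ> eps (n + 1) 0 \<circ> eta n n"
    by (rule lam_hom_eqI)
      (auto intro!: lam_hom_comp lam_hom_eps lam_hom_eta simp: eps_two_periods eta_two_periods)
  then show ?thesis
    by (simp add: face_degen_def dface_def sdeg_def Mf_comp_comp lam_hom_eps lam_hom_eta)
qed

lemma degen_face_sdeg_last:
  "Comp C (degen_face (Suc n)) (sdeg Mf n (Suc n)) = Comp C (sdeg Mf n (Suc n)) (face_degen n)"
  by (simp add: degen_face_def face_degen_def dface_def sdeg_def Mf_comp_comp lam_hom_eps lam_hom_eta)

lemma sdeg_last_degen_face:
  "Comp C (sdeg Mf n (Suc n)) (degen_face n) = Comp C (sdeg Mf n n) (degen_face n)"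
proof (cases n)
  case 0
  then show ?thesis
    by (simp add: degen_face_def comp_zero_right[OF sdeg_hom])
next
  case (Suc k)
  have "eps n 0 \<circ> eta k n \<circ> eta n (n + 1) = eps n 0 \<circ> eta k n \<circ> eta n n"
    by (rule lam_hom_eqI) (use Suc in \<open>auto intro!: lam_hom_comp lam_hom_eps lam_hom_eta
        simp: eps_two_periods eta_two_periods\<close>)
  then show ?thesis
    using Suc by (simp add: degen_face_def dface_def sdeg_def Mf_comp_comp lam_hom_eps lam_hom_eta)
qed

lemma face_degen_minus_degen_face_hom:
  "Add C (face_degen n) (Neg C (degen_face n)) \<in> Hom C (Mo n) (Mo n)"
  by (simp add: add_closed neg_closed face_degen_hom degen_face_hom)

lemma kappa_comp:
  assumes "f \<in> Hom C a (Mo n)"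
  shows "Comp C (kappa C Mf n) f =
    signed n (Add C (Comp C (face_degen n) f) (Neg C (Comp C (degen_face n) f)))"
  using comp_signed_left[OF assms face_degen_minus_degen_face_hom]
    comp_diff_left[OF assms face_degen_hom degen_face_hom]
  by (simp add: kappa_eq_signed)

lemma comp_kappa:
  assumes "g \<in> Hom C (Mo n) b"
  shows "Comp C g (kappa C Mf n) =
    signed n (Add C (Comp C g (face_degen n)) (Neg C (Comp C g (degen_face n))))"
  using comp_signed_right[OF face_degen_minus_degen_face_hom assms]
    comp_diff_right[OF face_degen_hom degen_face_hom assms]
  by (simp add: kappa_eq_signed)

lemma kappa_sdeg_first: "Comp C (kappa C Mf (Suc n)) (sdeg Mf n 0) = Zero C (Mo n) (Mo (Suc n))"
  using kappa_comp[OF sdeg_hom] face_degen_sdeg_first signed_zero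
    add_neg[OF comp_closed[OF sdeg_hom[of n 0] degen_face_hom[of "Suc n"]]]
  by simp

lemma kappa_sdeg:
  assumes "0 < i" "i \<le> n"
  shows "Comp C (kappa C Mf (Suc n)) (sdeg Mf n i) = Neg C (Comp C (sdeg Mf n (i - 1)) (kappa C Mf n))"
proof -
  let ?s = "sdeg Mf n (i - 1)"
  have diff_hom:
    "Add C (Comp C ?s (face_degen n)) (Neg C (Comp C ?s (degen_face n))) \<in> Hom C (Mo n) (Mo (Suc n))"
    by (simp add: add_closed neg_closed comp_closed[OF _ sdeg_hom] face_degen_hom degen_face_hom)
  show ?thesis
    using kappa_comp[OF sdeg_hom] comp_kappa[OF sdeg_hom] signed_Suc[OF diff_hom]
      face_degen_sdeg[OF assms] degen_face_sdeg[OF assms]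
    by simp
qed

lemma kappa_sdeg_last:
  "Comp C (kappa C Mf (Suc n)) (sdeg Mf n (Suc n)) =
    Comp C (Add C (sdeg Mf n (Suc n)) (Neg C (sdeg Mf n n))) (kappa C Mf n)"
proof -
  let ?s = "sdeg Mf n n" and ?s' = "sdeg Mf n (Suc n)"
  have s_fd: "Comp C ?s (face_degen n) \<in> Hom C (Mo n) (Mo (Suc n))"
    and s'_fd: "Comp C ?s' (face_degen n) \<in> Hom C (Mo n) (Mo (Suc n))"
    using comp_closed[OF face_degen_hom sdeg_hom] by simp_all
  have "Comp C (kappa C Mf (Suc n)) ?s' =
      signed (Suc n) (Add C (Comp C ?s (face_degen n)) (Neg C (Comp C ?s' (face_degen n))))"
    using kappa_comp[OF sdeg_hom] face_degen_sdeg_last degen_face_sdeg_last by simp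
  also have "\<dots> = signed n (Add C (Comp C ?s' (face_degen n)) (Neg C (Comp C ?s (face_degen n))))"
    using signed_Suc[OF add_closed[OF s_fd neg_closed[OF s'_fd]]] neg_diff[OF s_fd s'_fd]
      neg_signed by simp
  also have "\<dots> = Comp C (Add C ?s' (Neg C ?s)) (kappa C Mf n)"
  proof -
    have "Comp C (Add C ?s' (Neg C ?s)) (degen_face n) = Zero C (Mo n) (Mo (Suc n))"
      using comp_diff_left[OF degen_face_hom sdeg_hom sdeg_hom] sdeg_last_degen_face
        add_neg[OF comp_closed[OF degen_face_hom sdeg_hom]] by simp
    then show ?thesis
      using add_zero[OF add_closed[OF s'_fd neg_closed[OF s_fd]]]
        comp_kappa[OF add_closed[OF sdeg_hom neg_closed[OF sdeg_hom]]]
        comp_diff_left[OF face_degen_hom sdeg_hom sdeg_hom] neg_zero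
      by simp
  qed
  finally show ?thesis .
qed

end

theorem mainTheorem11:
  fixes C :: "('o,'m) preadd_cat" and Mo :: "nat \<Rightarrow> 'o"
    and Mf :: "nat \<Rightarrow> nat \<Rightarrow> (int \<Rightarrow> int) \<Rightarrow> 'm" and n i :: nat
  assumes "preadditive C" and "duplicial C Mo Mf" and "i \<le> n + 1"
  shows "Comp C (kappa C Mf (n + 1)) (sdeg Mf n i) =
    (if i = 0 then Zero C (Mo n) (Mo (n + 1))
     else if i \<le> n then Neg C (Comp C (sdeg Mf n (i - 1)) (kappa C Mf n))
     else Comp C (Add C (sdeg Mf n (n + 1)) (Neg C (sdeg Mf n n))) (kappa C Mf n))"
proof -
  interpret duplicial_module C Mo Mf
    using assms(1,2) by unfold_locales
  consider "i = 0" | "0 < i" "i \<le> n" | "i = Suc n"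
    using assms(3) by linarith
  then show ?thesis
    by cases (simp_all add: kappa_sdeg_first kappa_sdeg kappa_sdeg_last)
qed

end
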